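(* Let $X$ be a digraph and $S\subset V(X)$ such that every pair $x\notin S$, $y\in S$ joined by an arc (in either direction) forms a digon. Then $X$ and the digraph obtained from $X$ by replacing each such digon $\{x,y\}$ ($x\notin S$, $y\in S$) by the single arc $xy$ have the same $H$-spectrum.
   Context: A digraph $X$ has a finite vertex set and an arc set of ordered pairs of distinct vertices; $\{x,y\}$ is a digon if both $xy,yx$ are arcs. $H(X)$ has $(u,v)$-entry $1$ if $uv$ and $vu$ are arcs, $i$ if only $uv$ is an arc, $-i$ if only $vu$ is an arc, and $0$ otherwise; two digraphs have the same $H$-spectrum if their Hermitian adjacency matrices have the same characteristic polynomial. *)

theory Defs
  imports "Jordan_Normal_Form.Char_Poly"
begin

definition digraph :: "nat \<Rightarrow> (nat \<times> nat) set \<Rightarrow> bool" where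
  "digraph n A \<longleftrightarrow> A \<subseteq> {0..<n} \<times> {0..<n} \<and> (\<forall>x. (x, x) \<notin> A)"

definition herm_adj :: "nat \<Rightarrow> (nat \<times> nat) set \<Rightarrow> complex mat" where
  "herm_adj n A = mat n n (\<lambda>(u, v).
     if (u, v) \<in> A \<and> (v, u) \<in> A then 1
     else if (u, v) \<in> A then \<i>
     else if (v, u) \<in> A then - \<i>
     else 0)"

end

theory Submission
  imports Defs
begin

text \<open>Conjugating by the diagonal matrix with entry \<open>\<i>\<close> at the vertices outside \<open>S\<close> and \<open>1\<close>
  on \<open>S\<close> multiplies an entry \<open>(x, y)\<close> with \<open>x \<notin> S\<close>, \<open>y \<in> S\<close> by \<open>-\<i>\<close> and its mirror \<open>(y, x)\<close> by \<open>\<i>\<close>,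
  leaving all other entries alone. This turns the single arc \<open>xy\<close>
  (entries \<open>\<i>\<close>, \<open>-\<i>\<close>) into the digon (entries \<open>1\<close>, \<open>1\<close>), and similar matrices have the same
  characteristic polynomial.\<close>

lemma char_poly_diagonal_scaling:
  fixes B :: "'a :: comm_ring_1 mat"
  assumes B: "B \<in> carrier_mat n n" and inverse: "\<And>i. f i * g i = 1"
  shows "char_poly (mat n n (\<lambda>(i, j). f i * B $$ (i, j) * g j)) = char_poly B"
proof (rule char_poly_similar)
  let ?P = "mat_diag n f" and ?Q = "mat_diag n g"
  have "(\<lambda>i. f i * g i) = (\<lambda>_. 1)" "(\<lambda>i. g i * f i) = (\<lambda>_. 1)"
    using inverse by (auto simp: mult.commute)
  then have PQ: "?P * ?Q = 1\<^sub>m n" "?Q * ?P = 1\<^sub>m n"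
    by (simp_all only: mat_diag_diag mat_diag_one)
  have scaled: "mat n n (\<lambda>(i, j). f i * B $$ (i, j) * g j) = ?P * B * ?Q"
    by (subst mat_diag_mult_left[OF B], subst mat_diag_mult_right[of _ n], auto intro!: eq_matI)
  have "dim_row ?P = n"
    using mat_diag_dim by blast
  then have "similar_mat_wit (?P * B * ?Q) B ?P ?Q"
    using B PQ mult_carrier_mat[OF mult_carrier_mat[OF mat_diag_dim B] mat_diag_dim]
    unfolding similar_mat_wit_def Let_def by (simp del: mat_diag_diag)
  then show "similar_mat (mat n n (\<lambda>(i, j). f i * B $$ (i, j) * g j)) B"
    unfolding scaled similar_mat_def by blast
qed

lemma herm_adj_orient_digons:
  assumes "\<And>x y. x \<in> {0..<n} \<Longrightarrow> x \<notin> S \<Longrightarrow> y \<in> S \<Longrightarrow>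
             (x, y) \<in> A \<or> (y, x) \<in> A \<Longrightarrow> (x, y) \<in> A \<and> (y, x) \<in> A"
    and "f = (\<lambda>i. if i \<in> S then 1 else - \<i>)"
    and "g = (\<lambda>i. if i \<in> S then 1 else \<i>)"
  shows "mat n n (\<lambda>(i, j). f i *
           herm_adj n (A - {(y, x). y \<in> S \<and> x \<in> {0..<n} \<and> x \<notin> S}) $$ (i, j) * g j)
         = herm_adj n A"
proof (rule eq_matI)
  fix i j assume "i < dim_row (herm_adj n A)" "j < dim_col (herm_adj n A)"
  then have "i < n" "j < n" by (auto simp: herm_adj_def)
  then show "mat n n (\<lambda>(i, j). f i *
               herm_adj n (A - {(y, x). y \<in> S \<and> x \<in> {0..<n} \<and> x \<notin> S}) $$ (i, j) * g j) $$ (i, j)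
             = herm_adj n A $$ (i, j)"
    using assms(1)[of i j] assms(1)[of j i] by (auto simp: herm_adj_def assms(2,3))
qed (auto simp: herm_adj_def)

theorem proposition8p3:
  fixes n :: nat and A :: "(nat \<times> nat) set" and S :: "nat set"
  assumes "digraph n A"
    and "S \<subseteq> {0..<n}"
    and "\<And>x y. x \<in> {0..<n} \<Longrightarrow> x \<notin> S \<Longrightarrow> y \<in> S \<Longrightarrow>
           (x, y) \<in> A \<or> (y, x) \<in> A \<Longrightarrow> (x, y) \<in> A \<and> (y, x) \<in> A"
  shows "char_poly (herm_adj n A) =
         char_poly (herm_adj n (A - {(y, x). y \<in> S \<and> x \<in> {0..<n} \<and> x \<notin> S}))"
proof -
  let ?f = "\<lambda>i. if i \<in> S then 1 else - \<i>" and ?g = "\<lambda>i. if i \<in> S then 1 else \<i>"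
  let ?B = "herm_adj n (A - {(y, x). y \<in> S \<and> x \<in> {0..<n} \<and> x \<notin> S})"
  have "herm_adj n A = mat n n (\<lambda>(i, j). ?f i * ?B $$ (i, j) * ?g j)"
    using herm_adj_orient_digons[OF assms(3)] by simp
  also have "char_poly \<dots> = char_poly ?B"
    by (rule char_poly_diagonal_scaling) (auto simp: herm_adj_def)
  finally show ?thesis .
qed

end
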